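(* Let $f,g$ satisfy the standing assumptions below. Suppose $\beta\ge\frac{4Q_gM_f}{\mu^3}$ and $\hat\beta\ge\beta\max\{\frac{8L_g^2}{\mu},\frac1{4\mu},\frac\mu4\}$. Then for any $(x,y)\in\mathbb{R}^n\times\mathbb{R}^p$ and any $w\in\hat{\mathcal{D}}_s(x,y)$, $\sup_{z\in\mathcal{D}_h(x,y)}\langle w,z\rangle\ge\min\{\frac14,\frac{\beta^2}{16\hat\beta^2}\}\|w\|^2$.
   Context: Standing assumptions. (A1) Constants $M_f,\mu,L_g,Q_g>0$ exist such that: $f:\mathbb{R}^n\times\mathbb{R}^p\to\mathbb{R}$ is $M_f$-Lipschitz; $g$ is twice differentiable with $\nabla^2_{yy}g\succeq\mu I_p$; $\nabla g$ is $L_g$-Lipschitz; $\nabla^2_{yy}g,\nabla^2_{xy}g$ are $Q_g$-Lipschitz; $\nabla^2_{yy}g$ is continuously differentiable ($\nabla^2_{xy}g\in\mathbb{R}^{n\times p}$ has entries $\partial^2g/\partial x_i\partial y_j$). (A2) $f$ is a potential function of a conservative field $\mathcal{D}_f$ with compact convex values of norm at most $M_f$. Notation (all at $(x,y)$): $H=\nabla^2_{yy}g$; $\mathcal{A}(x,y):=y-H^{-1}\nabla_yg$; $\nabla^3_{xyy}g(x,y)[d]:=\lim_{t\to0}\frac1t(\nabla^2_{xy}g(x,y+td)-\nabla^2_{xy}g(x,y))$, $\nabla^3_{yyy}g(x,y)[d]:=\lim_{t\to0}\frac1t(\nabla^2_{yy}g(x,y+td)-\nabla^2_{yy}g(x,y))$;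 $J_{A,x}:=-\nabla^2_{xy}gH^{-1}+\nabla^3_{xyy}g[H^{-1}\nabla_yg]H^{-1}$, $J_{A,y}:=\nabla^3_{yyy}g[H^{-1}\nabla_yg]H^{-1}$; $\mathcal{D}_h(x,y):=\{(d_x+J_{A,x}d_y+\beta\nabla^2_{xy}g\nabla_yg,\ J_{A,y}d_y+\beta H\nabla_yg):(d_x,d_y)\in\mathcal{D}_f(x,\mathcal{A}(x,y))\}$; $\hat{\mathcal{D}}_s(x,y):=\{(d_x-\nabla^2_{xy}gH^{-1}d_y,\ \hat\beta\nabla_yg):(d_x,d_y)\in\mathcal{D}_f(x,\mathcal{A}(x,y))\}$. *)

theory Defs
  imports "HOL-Analysis.Analysis"
begin

definition abs_continuous_on :: "real \<Rightarrow> real \<Rightarrow> (real \<Rightarrow> 'a::real_normed_vector) \<Rightarrow> bool" where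
  "abs_continuous_on a b \<gamma> \<longleftrightarrow>
     (\<forall>\<epsilon>>0. \<exists>\<delta>>0. \<forall>S::(real \<times> real) set.
        finite S \<and> (\<forall>(s,t)\<in>S. a \<le> s \<and> s \<le> t \<and> t \<le> b)
        \<and> (\<forall>(s,t)\<in>S. \<forall>(s',t')\<in>S. (s,t) \<noteq> (s',t') \<longrightarrow> t \<le> s' \<or> t' \<le> s)
        \<and> (\<Sum>(s,t)\<in>S. t - s) < \<delta>
        \<longrightarrow> (\<Sum>(s,t)\<in>S. norm (\<gamma> t - \<gamma> s)) < \<epsilon>)"

definition path_pairing :: "('a::euclidean_space \<Rightarrow> 'a set) \<Rightarrow> (real \<Rightarrow> 'a) \<Rightarrow> real \<Rightarrow> real" where
  "path_pairing D \<gamma> t = (SUP v\<in>D (\<gamma> t). vector_derivative \<gamma> (at t) \<bullet> v)"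

definition conservative_field :: "('a::euclidean_space \<Rightarrow> 'a set) \<Rightarrow> bool" where
  "conservative_field D \<longleftrightarrow>
     (\<forall>z. D z \<noteq> {} \<and> compact (D z))
     \<and> closed {(z, v). v \<in> D z}
     \<and> (\<forall>\<gamma>. abs_continuous_on 0 1 \<gamma> \<and> \<gamma> 0 = \<gamma> 1 \<longrightarrow>
            integral {0..1} (path_pairing D \<gamma>) = 0)"

definition potential_of :: "('a::euclidean_space \<Rightarrow> real) \<Rightarrow> ('a \<Rightarrow> 'a set) \<Rightarrow> bool" where
  "potential_of f D \<longleftrightarrow> conservative_field D \<and>
     (\<forall>\<gamma>. abs_continuous_on 0 1 \<gamma> \<longrightarrow>
            f (\<gamma> 1) = f (\<gamma> 0) + integral {0..1} (path_pairing D \<gamma>))"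

end

theory Submission
  imports Defs
begin

(* Test the supremum with the element z of D_h(x,y) built from the same pair (d_x, d_y) that
   produces w = (a, betah * grad_y g), where a = d_x - Hxy H^-1 d_y.  Then <w, z> is
   |a|^2 + beta betah <grad_y g, H grad_y g> plus cross terms.  The third-derivative terms are
   at most Qg Mf / mu^2 |grad_y g| in norm, since they are Qg-Lipschitz difference quotients
   evaluated at H^-1 grad_y g and H^-1 d_y, and |H^-1| <= 1/mu; the term Hxy grad_y g is at most
   Lg |grad_y g|.  The constraints on beta and betah make the resulting quadratic form in
   (|a|, |grad_y g|) dominate min(1/4, beta^2/(16 betah^2)) (|a|^2 + betah^2 |grad_y g|^2),
   which is that constant times |w|^2. *)

lemma difference_quotient_tendsto_derivative:
  assumes "(f has_derivative f') (at x)"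
  shows "((\<lambda>t. (1 / t) *\<^sub>R (f (x + t *\<^sub>R d) - f x)) \<longlongrightarrow> f' d) (at 0)"
proof -
  have "((\<lambda>t. x + t *\<^sub>R d) has_derivative (\<lambda>t. t *\<^sub>R d)) (at 0)"
    by (auto intro!: derivative_eq_intros)
  with assms have "((\<lambda>t. f (x + t *\<^sub>R d)) has_derivative (\<lambda>t. f' (t *\<^sub>R d))) (at 0)"
    using has_derivative_compose[of "\<lambda>t. x + t *\<^sub>R d"] by fastforce
  moreover have "f' (t *\<^sub>R d) = t *\<^sub>R f' d" for t
    using assms has_derivative_linear linear_scale by blast
  ultimately have lim: "((\<lambda>t. norm (f (x + t *\<^sub>R d) - f x - t *\<^sub>R f' d) / \<bar>t\<bar>) \<longlongrightarrow> 0) (at 0)"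
    by (simp add: has_derivative_at)
  have "norm (f (x + t *\<^sub>R d) - f x - t *\<^sub>R f' d) / \<bar>t\<bar>
      = norm ((1 / t) *\<^sub>R (f (x + t *\<^sub>R d) - f x) - f' d)" if "t \<noteq> 0" for t :: real
  proof -
    have "f (x + t *\<^sub>R d) - f x - t *\<^sub>R f' d = t *\<^sub>R ((1 / t) *\<^sub>R (f (x + t *\<^sub>R d) - f x) - f' d)"
      using that by (simp add: algebra_simps)
    then show ?thesis using that by simp
  qed
  then have "\<forall>\<^sub>F t in at 0. norm (f (x + t *\<^sub>R d) - f x - t *\<^sub>R f' d) / \<bar>t\<bar>
      = norm ((1 / t) *\<^sub>R (f (x + t *\<^sub>R d) - f x) - f' d)"
    by (simp add: eventually_at_filter)
  from Lim_transform_eventually[OF lim this] show ?thesis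
    by (simp add: tendsto_norm_zero_iff LIM_zero_iff)
qed

lemma norm_difference_quotient_limit_le:
  fixes f :: "'a::real_normed_vector \<Rightarrow> 'b::real_normed_vector"
  assumes lim: "((\<lambda>t. (1 / t) *\<^sub>R (f (x + t *\<^sub>R d) - f x)) \<longlongrightarrow> l) (at 0)"
    and lip: "\<And>u v. norm (f u - f v) \<le> L * norm (u - v)"
  shows "norm l \<le> L * norm d"
proof (rule Lim_norm_ubound[OF _ lim])
  have "norm ((1 / t) *\<^sub>R (f (x + t *\<^sub>R d) - f x)) \<le> L * norm d" if "t \<noteq> 0" for t
  proof -
    have "norm (f (x + t *\<^sub>R d) - f x) \<le> L * norm d * \<bar>t\<bar>"
      using lip[of "x + t *\<^sub>R d" x] by (simp add: mult_ac)
    then show ?thesis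
      using that by (simp add: pos_divide_le_eq)
  qed
  then show "\<forall>\<^sub>F t in at 0. norm ((1 / t) *\<^sub>R (f (x + t *\<^sub>R d) - f x)) \<le> L * norm d"
    by (simp add: eventually_at_filter)
qed simp

corollary norm_derivative_le_Lipschitz:
  fixes f :: "'a::real_normed_vector \<Rightarrow> 'b::real_normed_vector"
  assumes "(f has_derivative f') (at x)"
    and "\<And>u v. norm (f u - f v) \<le> L * norm (u - v)"
  shows "norm (f' d) \<le> L * norm d"
  using norm_difference_quotient_limit_le[of f x d,
      OF difference_quotient_tendsto_derivative[OF assms(1), of d] assms(2)] .

lemma norm_partial_difference_quotient_limit_mult_le:
  fixes M :: "'a::real_normed_vector \<times> 'b::real_normed_vector \<Rightarrow> real^'n::finite^'m::finite"
  assumes lim: "((\<lambda>t. (1 / t) *\<^sub>R (M (a, b + t *\<^sub>R d) - M (a, b))) \<longlongrightarrow> T) (at 0)"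
    and lip: "\<forall>z z'. onorm (\<lambda>v. (M z - M z') *v v) \<le> Q * dist z z'"
  shows "norm (T *v u) \<le> Q * norm u * norm d"
proof (rule norm_difference_quotient_limit_le[where f="\<lambda>b. M (a, b) *v u"])
  have "linear (\<lambda>A::real^'n^'m. A *v u)"
    by (rule linearI) (simp_all add: matrix_vector_mult_add_rdistrib scaleR_matrix_vector_assoc)
  then have "((\<lambda>t. ((1 / t) *\<^sub>R (M (a, b + t *\<^sub>R d) - M (a, b))) *v u) \<longlongrightarrow> T *v u) (at 0)"
    using bounded_linear.tendsto[OF _ lim] linear_conv_bounded_linear by blast
  then show "((\<lambda>t. (1 / t) *\<^sub>R (M (a, b + t *\<^sub>R d) *v u - M (a, b) *v u)) \<longlongrightarrow> T *v u) (at 0)"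
    by (simp add: matrix_vector_mult_diff_rdistrib flip: scaleR_matrix_vector_assoc)
  show "norm (M (a, z) *v u - M (a, z') *v u) \<le> Q * norm u * norm (z - z')" for z z'
  proof -
    have "norm (M (a, z) *v u - M (a, z') *v u) = norm ((M (a, z) - M (a, z')) *v u)"
      by (simp add: matrix_vector_mult_diff_rdistrib)
    also have "\<dots> \<le> onorm (\<lambda>v. (M (a, z) - M (a, z')) *v v) * norm u"
      by (rule onorm) (simp add: matrix_vector_mul_bounded_linear)
    also have "\<dots> \<le> Q * dist (a, z) (a, z') * norm u"
      using lip by (intro mult_right_mono) auto
    finally show ?thesis
      by (simp add: dist_Pair_Pair dist_norm mult_ac)
  qed
qed

lemma norm_fst_slice_diff_le:
  fixes F :: "'a::real_normed_vector \<times> 'b::real_normed_vector \<Rightarrow> 'c::real_normed_vector \<times> 'd::real_normed_vector"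
  assumes "\<forall>z z'. dist (F z) (F z') \<le> L * dist z z'"
  shows "norm (fst (F (a, b)) - fst (F (a, b'))) \<le> L * norm (b - b')"
proof -
  have "norm (fst (F (a, b)) - fst (F (a, b'))) \<le> norm (F (a, b) - F (a, b'))"
    by (metis fst_diff norm_fst_le prod.collapse)
  also have "\<dots> \<le> L * norm (b - b')"
    using assms[rule_format, of "(a, b)" "(a, b')"] by (simp add: dist_norm)
  finally show ?thesis .
qed

lemma matrix_inv_right:
  assumes "invertible A"
  shows "A ** matrix_inv A = mat 1"
  using assms unfolding invertible_def matrix_inv_def by (rule someI_ex[THEN conjunct1])

lemma norm_matrix_inv_mult_le:
  fixes H :: "real^'n::finite^'n"
  assumes "\<mu> > 0" and coercive: "\<And>v. \<mu> * (norm v)\<^sup>2 \<le> v \<bullet> (H *v v)"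
  shows "norm (matrix_inv H *v v) \<le> norm v / \<mu>"
proof -
  have lower: "\<mu> * norm u \<le> norm (H *v u)" for u
  proof -
    have "norm u * (\<mu> * norm u) \<le> norm u * norm (H *v u)"
      using coercive[of u] norm_cauchy_schwarz[of u "H *v u"] by (simp add: power2_eq_square mult_ac)
    then show ?thesis
      by (cases "u = 0") auto
  qed
  have "u = 0" if "H *v u = 0" for u
    using lower[of u] that \<open>\<mu> > 0\<close> by (simp add: mult_le_0_iff)
  then have "invertible H"
    by (simp add: invertible_left_inverse matrix_left_invertible_ker)
  then have "H *v (matrix_inv H *v v) = v"
    by (simp add: matrix_vector_mul_assoc matrix_inv_right)
  then have "\<mu> * norm (matrix_inv H *v v) \<le> norm v"
    using lower[of "matrix_inv H *v v"] by simp
  then show ?thesis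
    using \<open>\<mu> > 0\<close> by (simp add: field_simps)
qed

lemma norm_third_derivative_term_le:
  fixes M :: "'a::real_normed_vector \<times> (real^'p::finite) \<Rightarrow> real^'p^'m::finite"
    and H :: "real^'p^'p"
  assumes "((\<lambda>t. (1 / t) *\<^sub>R (M (a, b + t *\<^sub>R (matrix_inv H *v g)) - M (a, b))) \<longlongrightarrow> T) (at 0)"
    and "\<forall>z z'. onorm (\<lambda>v. (M z - M z') *v v) \<le> Q * dist z z'"
    and "\<mu> > 0" and "\<And>v. \<mu> * (norm v)\<^sup>2 \<le> v \<bullet> (H *v v)"
    and "Q \<ge> 0" and "norm v \<le> R"
  shows "norm (T *v (matrix_inv H *v v)) \<le> Q * R / \<mu>\<^sup>2 * norm g"
proof -
  have "0 \<le> R"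
    using assms(6) norm_ge_zero order_trans by blast
  have "norm (T *v (matrix_inv H *v v)) \<le> Q * norm (matrix_inv H *v v) * norm (matrix_inv H *v g)"
    using assms(1,2) by (rule norm_partial_difference_quotient_limit_mult_le)
  also have "\<dots> \<le> Q * (R / \<mu>) * (norm g / \<mu>)"
  proof (intro mult_mono mult_left_mono)
    have inv: "norm (matrix_inv H *v u) \<le> norm u / \<mu>" for u
      using assms(3,4) by (rule norm_matrix_inv_mult_le)
    show "norm (matrix_inv H *v v) \<le> R / \<mu>"
      using assms(3,6) by (intro order_trans[OF inv divide_right_mono]) auto
    show "norm (matrix_inv H *v g) \<le> norm g / \<mu>"
      by (rule inv)
    show "0 \<le> Q * (R / \<mu>)"
      using assms(3,5) \<open>0 \<le> R\<close> by simp
  qed (use assms \<open>0 \<le> R\<close> in auto)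
  finally show ?thesis
    by (simp add: power2_eq_square)
qed

lemma min_coefficient_weighted_sum_le:
  fixes A G \<beta> \<beta>h \<mu> :: real
  assumes "\<beta> > 0" and "\<beta>h > 0" and "\<beta> \<le> 4 * \<beta>h * \<mu>"
  shows "min (1 / 4) (\<beta>\<^sup>2 / (16 * \<beta>h\<^sup>2)) * (A\<^sup>2 + \<beta>h\<^sup>2 * G\<^sup>2) \<le> A\<^sup>2 / 4 + \<beta> * \<beta>h * \<mu> * G\<^sup>2 / 4"
proof -
  have "min (1 / 4) (\<beta>\<^sup>2 / (16 * \<beta>h\<^sup>2)) * A\<^sup>2 \<le> 1 / 4 * A\<^sup>2"
    by (intro mult_right_mono) auto
  moreover have "min (1 / 4) (\<beta>\<^sup>2 / (16 * \<beta>h\<^sup>2)) * (\<beta>h\<^sup>2 * G\<^sup>2)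
      \<le> \<beta>\<^sup>2 / (16 * \<beta>h\<^sup>2) * (\<beta>h\<^sup>2 * G\<^sup>2)"
    by (intro mult_right_mono) auto
  moreover have "\<beta>\<^sup>2 / (16 * \<beta>h\<^sup>2) * (\<beta>h\<^sup>2 * G\<^sup>2) = \<beta> * \<beta> * G\<^sup>2 / 16"
    using \<open>\<beta>h > 0\<close> by (simp add: power2_eq_square)
  moreover have "\<beta> * \<beta> * G\<^sup>2 \<le> \<beta> * (4 * \<beta>h * \<mu>) * G\<^sup>2"
    using assms by (intro mult_right_mono mult_left_mono) auto
  ultimately show ?thesis
    by (simp add: distrib_left)
qed

lemma cross_coefficient_square_le:
  fixes \<beta> \<beta>h \<mu> L :: real
  assumes "\<beta> > 0" and "\<mu> > 0" and "8 * \<beta> * L\<^sup>2 \<le> \<beta>h * \<mu>" and "\<beta> * \<mu> \<le> 4 * \<beta>h"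
  shows "(\<beta> * (\<mu> / 4 + L))\<^sup>2 \<le> 3 / 4 * \<beta> * \<beta>h * \<mu>"
proof -
  have "(\<mu> / 4 + L)\<^sup>2 \<le> 2 * (\<mu>\<^sup>2 / 16 + L\<^sup>2)"
    using zero_le_power2[of "\<mu> / 4 - L"] by (simp add: power2_eq_square algebra_simps)
  then have "(\<beta> * (\<mu> / 4 + L))\<^sup>2 \<le> \<beta>\<^sup>2 * (2 * (\<mu>\<^sup>2 / 16 + L\<^sup>2))"
    unfolding power_mult_distrib by (rule mult_left_mono) simp
  also have "\<dots> \<le> 3 / 4 * \<beta> * \<beta>h * \<mu>"
  proof -
    have "\<beta> * \<mu> * (\<beta> * \<mu>) \<le> \<beta> * \<mu> * (4 * \<beta>h)"
      using assms by (intro mult_left_mono) auto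
    moreover have "\<beta> * (8 * \<beta> * L\<^sup>2) \<le> \<beta> * (\<beta>h * \<mu>)"
      using assms by (intro mult_left_mono) auto
    ultimately show ?thesis
      by (simp add: power2_eq_square algebra_simps)
  qed
  finally show ?thesis .
qed

lemma quadratic_lower_bound:
  fixes A G \<beta> \<beta>h \<mu> L K :: real
  assumes "A \<ge> 0" "G \<ge> 0" "\<beta> > 0" "\<mu> > 0" "K \<ge> 0" "K \<le> \<beta> * \<mu> / 4"
    and \<beta>h: "\<beta>h \<ge> \<beta> * Max {8 * L\<^sup>2 / \<mu>, 1 / (4 * \<mu>), \<mu> / 4}"
  shows "min (1 / 4) (\<beta>\<^sup>2 / (16 * \<beta>h\<^sup>2)) * (A\<^sup>2 + \<beta>h\<^sup>2 * G\<^sup>2)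
    \<le> A\<^sup>2 - (K + \<beta> * L) * A * G - \<beta>h * K * G\<^sup>2 + \<beta> * \<beta>h * \<mu> * G\<^sup>2"
proof -
  have below_Max: "\<beta> * X \<le> \<beta>h" if "X \<in> {8 * L\<^sup>2 / \<mu>, 1 / (4 * \<mu>), \<mu> / 4}" for X
  proof -
    have "\<beta> * X \<le> \<beta> * Max {8 * L\<^sup>2 / \<mu>, 1 / (4 * \<mu>), \<mu> / 4}"
      using that \<open>\<beta> > 0\<close> by (intro mult_left_mono Max_ge) auto
    then show ?thesis
      using \<beta>h by linarith
  qed
  have Max_L: "8 * \<beta> * L\<^sup>2 \<le> \<beta>h * \<mu>"
    using below_Max[of "8 * L\<^sup>2 / \<mu>"] \<open>\<mu> > 0\<close> by (simp add: field_simps)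
  have Max_inv: "\<beta> \<le> 4 * \<beta>h * \<mu>"
    using below_Max[of "1 / (4 * \<mu>)"] \<open>\<mu> > 0\<close> by (simp add: field_simps)
  have Max_mu: "\<beta> * \<mu> \<le> 4 * \<beta>h"
    using below_Max[of "\<mu> / 4"] by simp
  have "\<beta>h > 0"
    using Max_mu mult_pos_pos[OF \<open>\<beta> > 0\<close> \<open>\<mu> > 0\<close>] by linarith
  \<comment> \<open>s is the coefficient of A G once K is replaced by its bound \<beta> \<mu> / 4\<close>
  define s where "s = \<beta> * (\<mu> / 4 + L)"
  have s: "s\<^sup>2 \<le> 3 / 4 * \<beta> * \<beta>h * \<mu>"
    unfolding s_def using \<open>\<beta> > 0\<close> \<open>\<mu> > 0\<close> Max_L Max_mu by (rule cross_coefficient_square_le)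
  have "0 \<le> 3 / 4 * (A - 2 / 3 * s * G)\<^sup>2 + (3 / 4 * \<beta> * \<beta>h * \<mu> - s\<^sup>2) / 3 * G\<^sup>2
      + \<beta> * \<beta>h * \<mu> * G\<^sup>2 / 4"
    using s \<open>\<beta> > 0\<close> \<open>\<beta>h > 0\<close> \<open>\<mu> > 0\<close> by (intro add_nonneg_nonneg mult_nonneg_nonneg) auto
  then have "A\<^sup>2 / 4 + \<beta> * \<beta>h * \<mu> * G\<^sup>2 / 4 \<le> A\<^sup>2 - s * A * G + 3 / 4 * \<beta> * \<beta>h * \<mu> * G\<^sup>2"
    by (simp add: power2_eq_square field_simps)
  also have "\<dots> \<le> A\<^sup>2 - (K + \<beta> * L) * A * G - \<beta>h * K * G\<^sup>2 + \<beta> * \<beta>h * \<mu> * G\<^sup>2"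
  proof -
    have "K * (A * G) \<le> \<beta> * \<mu> / 4 * (A * G)"
      using assms by (intro mult_right_mono) auto
    moreover have "K * (\<beta>h * G\<^sup>2) \<le> \<beta> * \<mu> / 4 * (\<beta>h * G\<^sup>2)"
      using assms \<open>\<beta>h > 0\<close> by (intro mult_right_mono) auto
    ultimately show ?thesis
      by (simp add: s_def algebra_simps)
  qed
  finally have "A\<^sup>2 / 4 + \<beta> * \<beta>h * \<mu> * G\<^sup>2 / 4
      \<le> A\<^sup>2 - (K + \<beta> * L) * A * G - \<beta>h * K * G\<^sup>2 + \<beta> * \<beta>h * \<mu> * G\<^sup>2" .
  with min_coefficient_weighted_sum_le[where A = A and G = G, OF \<open>\<beta> > 0\<close> \<open>\<beta>h > 0\<close> Max_inv] show ?thesis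
    by linarith
qed

lemma inner_pair_lower_bound:
  fixes a t h :: "'a::real_inner" and g s k :: "'b::real_inner"
  assumes t: "norm t \<le> K * norm g" and s: "norm s \<le> K * norm g" and h: "norm h \<le> L * norm g"
    and k: "\<mu> * (norm g)\<^sup>2 \<le> g \<bullet> k"
    and "\<beta> > 0" "\<mu> > 0" "K \<ge> 0" "K \<le> \<beta> * \<mu> / 4"
    and \<beta>h: "\<beta>h \<ge> \<beta> * Max {8 * L\<^sup>2 / \<mu>, 1 / (4 * \<mu>), \<mu> / 4}"
  shows "min (1 / 4) (\<beta>\<^sup>2 / (16 * \<beta>h\<^sup>2)) * (norm (a, \<beta>h *\<^sub>R g))\<^sup>2
    \<le> (a, \<beta>h *\<^sub>R g) \<bullet> (a + t + \<beta> *\<^sub>R h, s + \<beta> *\<^sub>R k)"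
proof -
  have "\<beta> * (\<mu> / 4) \<le> \<beta> * Max {8 * L\<^sup>2 / \<mu>, 1 / (4 * \<mu>), \<mu> / 4}"
    using \<open>\<beta> > 0\<close> by (intro mult_left_mono Max_ge) auto
  moreover have "0 < \<beta> * (\<mu> / 4)"
    using \<open>\<beta> > 0\<close> \<open>\<mu> > 0\<close> by simp
  ultimately have "\<beta>h \<ge> 0"
    using \<beta>h by linarith
  have at: "- (norm a * (K * norm g)) \<le> a \<bullet> t"
    using Cauchy_Schwarz_ineq2[of a t] mult_left_mono[OF t norm_ge_zero[of a]] by linarith
  have ah: "- (norm a * (L * norm g)) \<le> a \<bullet> h"
    using Cauchy_Schwarz_ineq2[of a h] mult_left_mono[OF h norm_ge_zero[of a]] by linarith
  have gs: "- (norm g * (K * norm g)) \<le> g \<bullet> s"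
    using Cauchy_Schwarz_ineq2[of g s] mult_left_mono[OF s norm_ge_zero[of g]] by linarith
  have "min (1 / 4) (\<beta>\<^sup>2 / (16 * \<beta>h\<^sup>2)) * (norm (a, \<beta>h *\<^sub>R g))\<^sup>2
      = min (1 / 4) (\<beta>\<^sup>2 / (16 * \<beta>h\<^sup>2)) * ((norm a)\<^sup>2 + \<beta>h\<^sup>2 * (norm g)\<^sup>2)"
    using \<open>\<beta>h \<ge> 0\<close> by (simp add: norm_Pair power_mult_distrib)
  also have "\<dots> \<le> (norm a)\<^sup>2 - (K + \<beta> * L) * norm a * norm g - \<beta>h * K * (norm g)\<^sup>2
      + \<beta> * \<beta>h * \<mu> * (norm g)\<^sup>2"
    using assms by (intro quadratic_lower_bound) auto
  also have "\<dots> \<le> (norm a)\<^sup>2 + a \<bullet> t + \<beta> * (a \<bullet> h) + \<beta>h * (g \<bullet> s) + \<beta> * \<beta>h * (g \<bullet> k)"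
  proof -
    have "\<beta> * (- (norm a * (L * norm g))) \<le> \<beta> * (a \<bullet> h)"
      using ah \<open>\<beta> > 0\<close> by (intro mult_left_mono) auto
    moreover have "\<beta>h * (- (norm g * (K * norm g))) \<le> \<beta>h * (g \<bullet> s)"
      using gs \<open>\<beta>h \<ge> 0\<close> by (intro mult_left_mono) auto
    moreover have "\<beta> * \<beta>h * (\<mu> * (norm g)\<^sup>2) \<le> \<beta> * \<beta>h * (g \<bullet> k)"
      using k \<open>\<beta> > 0\<close> \<open>\<beta>h \<ge> 0\<close> by (intro mult_left_mono) auto
    ultimately show ?thesis
      using at by (simp add: power2_eq_square algebra_simps)
  qed
  also have "\<dots> = (a, \<beta>h *\<^sub>R g) \<bullet> (a + t + \<beta> *\<^sub>R h, s + \<beta> *\<^sub>R k)"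
    by (simp add: inner_add_right power2_norm_eq_inner algebra_simps)
  finally show ?thesis .
qed

lemma inner_le_SUP_compact_image:
  fixes F :: "'a::topological_space \<Rightarrow> 'b::topological_space \<Rightarrow> 'c::real_inner"
  assumes "compact S" and "continuous_on S (\<lambda>p. F (fst p) (snd p))" and "(a, b) \<in> S"
  shows "w \<bullet> F a b \<le> (SUP z \<in> {F a b | a b. (a, b) \<in> S}. w \<bullet> z)"
proof -
  have image: "{F a b | a b. (a, b) \<in> S} = (\<lambda>p. F (fst p) (snd p)) ` S"
    by force
  have "compact ((\<lambda>z. w \<bullet> z) ` (\<lambda>p. F (fst p) (snd p)) ` S)"
    by (intro compact_continuous_image continuous_intros assms)
  then have "bdd_above ((\<lambda>z. w \<bullet> z) ` (\<lambda>p. F (fst p) (snd p)) ` S)"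
    by (intro bounded_imp_bdd_above compact_imp_bounded)
  then show ?thesis
    unfolding image by (rule cSUP_upper2) (use assms(3) in auto)
qed

lemma potential_of_compact:
  assumes "potential_of f D"
  shows "compact (D z)"
  using assms unfolding potential_of_def conservative_field_def by blast

theorem proposition4p6:
  fixes f g :: "(real^('n::finite)) \<times> (real^('p::finite)) \<Rightarrow> real"
    and Dg :: "(real^'n) \<times> (real^'p) \<Rightarrow> (real^'n) \<times> (real^'p)"
    and Hyy :: "(real^'n) \<times> (real^'p) \<Rightarrow> real^'p^'p"
    and Hxy :: "(real^'n) \<times> (real^'p) \<Rightarrow> real^'p^'n"
    and T3xyy :: "(real^'n) \<times> (real^'p) \<Rightarrow> real^'p \<Rightarrow> real^'p^'n"
    and T3yyy :: "(real^'n) \<times> (real^'p) \<Rightarrow> real^'p \<Rightarrow> real^'p^'p"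
    and Df :: "(real^'n) \<times> (real^'p) \<Rightarrow> ((real^'n) \<times> (real^'p)) set"
    and Mf \<mu> Lg Qg \<beta> \<beta>h :: real
    and x :: "real^'n" and y :: "real^'p"
    and w :: "(real^'n) \<times> (real^'p)"
  assumes pos: "Mf > 0" "\<mu> > 0" "Lg > 0" "Qg > 0"
    \<comment> \<open>(A1) f is Mf-Lipschitz\<close>
    and f_lip: "\<forall>z z'. \<bar>f z - f z'\<bar> \<le> Mf * dist z z'"
    \<comment> \<open>g twice differentiable: Dg is the gradient of g and is differentiable\<close>
    and g_grad: "\<forall>z. (g has_derivative (\<lambda>h. Dg z \<bullet> h)) (at z)"
    and Dg_diff: "\<forall>z. Dg differentiable (at z)"
    \<comment> \<open>Hessian blocks: Hyy = nabla^2_yy g, Hxy = nabla^2_xy g (n x p)\<close>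
    and Hyy_def: "\<forall>a b. ((\<lambda>b'. snd (Dg (a, b'))) has_derivative (\<lambda>d. Hyy (a, b) *v d)) (at b)"
    and Hxy_def: "\<forall>a b. ((\<lambda>b'. fst (Dg (a, b'))) has_derivative (\<lambda>d. Hxy (a, b) *v d)) (at b)"
    \<comment> \<open>strong convexity in y\<close>
    and strong: "\<forall>z v. v \<bullet> (Hyy z *v v) \<ge> \<mu> * (norm v)\<^sup>2"
    \<comment> \<open>gradient Lg-Lipschitz\<close>
    and Dg_lip: "\<forall>z z'. dist (Dg z) (Dg z') \<le> Lg * dist z z'"
    \<comment> \<open>Hessian blocks Qg-Lipschitz (operator norm)\<close>
    and Hyy_lip: "\<forall>z z'. onorm (\<lambda>v. (Hyy z - Hyy z') *v v) \<le> Qg * dist z z'"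
    and Hxy_lip: "\<forall>z z'. onorm (\<lambda>v. (Hxy z - Hxy z') *v v) \<le> Qg * dist z z'"
    \<comment> \<open>Hyy continuously differentiable\<close>
    and Hyy_C1: "\<exists>D :: (real^'n) \<times> (real^'p) \<Rightarrow> ((real^'n) \<times> (real^'p)) \<Rightarrow>\<^sub>L (real^'p^'p).
                   (\<forall>z. (Hyy has_derivative blinfun_apply (D z)) (at z)) \<and> continuous_on UNIV D"
    \<comment> \<open>third-order directional derivatives along y (defined as limits)\<close>
    and T3xyy_def: "\<forall>a b d. ((\<lambda>t. (1 / t) *\<^sub>R (Hxy (a, b + t *\<^sub>R d) - Hxy (a, b))) \<longlongrightarrow> T3xyy (a, b) d) (at 0)"
    and T3yyy_def: "\<forall>a b d. ((\<lambda>t. (1 / t) *\<^sub>R (Hyy (a, b + t *\<^sub>R d) - Hyy (a, b))) \<longlongrightarrow> T3yyy (a, b) d) (at 0)"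
    \<comment> \<open>(A2)\<close>
    and f_pot: "potential_of f Df"
    and Df_convex: "\<forall>z. convex (Df z)"
    and Df_bound: "\<forall>z. \<forall>v\<in>Df z. norm v \<le> Mf"
    \<comment> \<open>parameters\<close>
    and beta: "\<beta> \<ge> 4 * Qg * Mf / \<mu> ^ 3"
    and betah: "\<beta>h \<ge> \<beta> * Max {8 * Lg\<^sup>2 / \<mu>, 1 / (4 * \<mu>), \<mu> / 4}"
    and w_in: "w \<in> (let H = Hyy (x, y); Hi = matrix_inv H; gy = snd (Dg (x, y));
                        A = y - Hi *v gy
                    in {(dx - (Hxy (x, y) ** Hi) *v dy, \<beta>h *\<^sub>R gy) | dx dy. (dx, dy) \<in> Df (x, A)})"
  shows "(SUP z \<in> (let H = Hyy (x, y); Hi = matrix_inv H; gy = snd (Dg (x, y));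
                        A = y - Hi *v gy; d = Hi *v gy;
                        JAx = - (Hxy (x, y) ** Hi) + T3xyy (x, y) d ** Hi;
                        JAy = T3yyy (x, y) d ** Hi
                    in {(dx + JAx *v dy + \<beta> *\<^sub>R (Hxy (x, y) *v gy),
                         JAy *v dy + \<beta> *\<^sub>R (H *v gy)) | dx dy. (dx, dy) \<in> Df (x, A)}).
            w \<bullet> z)
         \<ge> min (1 / 4) (\<beta>\<^sup>2 / (16 * \<beta>h\<^sup>2)) * (norm w)\<^sup>2"
proof -
  define H where "H = Hyy (x, y)"
  define gy where "gy = snd (Dg (x, y))"
  define d where "d = matrix_inv H *v gy"
  define JAx where "JAx = - (Hxy (x, y) ** matrix_inv H) + T3xyy (x, y) d ** matrix_inv H"
  define JAy where "JAy = T3yyy (x, y) d ** matrix_inv H"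
  from w_in obtain dx dy where dxy: "(dx, dy) \<in> Df (x, y - d)"
    and w: "w = (dx - (Hxy (x, y) ** matrix_inv H) *v dy, \<beta>h *\<^sub>R gy)"
    unfolding Let_def H_def gy_def d_def by blast
  have "norm dy \<le> Mf"
    using Df_bound dxy norm_snd_le[of dy dx] by fastforce
  note third_le = norm_third_derivative_term_le[OF _ _ pos(2) strong[rule_format, where z = "(x, y)"]
      less_imp_le[OF pos(4)] \<open>norm dy \<le> Mf\<close>]
  have T3xyy_le: "norm (T3xyy (x, y) d *v (matrix_inv H *v dy)) \<le> Qg * Mf / \<mu>\<^sup>2 * norm gy"
    unfolding d_def H_def by (rule third_le[OF T3xyy_def[rule_format, of x y] Hxy_lip])
  have T3yyy_le: "norm (T3yyy (x, y) d *v (matrix_inv H *v dy)) \<le> Qg * Mf / \<mu>\<^sup>2 * norm gy"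
    unfolding d_def H_def by (rule third_le[OF T3yyy_def[rule_format, of x y] Hyy_lip])
  have Hxy_le: "norm (Hxy (x, y) *v gy) \<le> Lg * norm gy"
    by (rule norm_derivative_le_Lipschitz[OF Hxy_def[rule_format, of x y]
          norm_fst_slice_diff_le[OF Dg_lip]])
  have "0 < 4 * Qg * Mf / \<mu> ^ 3" and K_le: "Qg * Mf / \<mu>\<^sup>2 \<le> \<beta> * \<mu> / 4"
    using beta pos by (simp_all add: field_simps power2_eq_square power3_eq_cube)
  then have "0 < \<beta>"
    using beta by linarith
  have "min (1 / 4) (\<beta>\<^sup>2 / (16 * \<beta>h\<^sup>2)) * (norm w)\<^sup>2
      \<le> w \<bullet> ((dx - (Hxy (x, y) ** matrix_inv H) *v dy) + T3xyy (x, y) d *v (matrix_inv H *v dy)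
               + \<beta> *\<^sub>R (Hxy (x, y) *v gy), T3yyy (x, y) d *v (matrix_inv H *v dy) + \<beta> *\<^sub>R (H *v gy))"
    unfolding w
    by (rule inner_pair_lower_bound[OF T3xyy_le T3yyy_le Hxy_le
          strong[rule_format, where z = "(x, y)", folded H_def] \<open>0 < \<beta>\<close> pos(2) _ K_le betah])
        (use pos in simp)
  also have "\<dots> = w \<bullet> (dx + JAx *v dy + \<beta> *\<^sub>R (Hxy (x, y) *v gy), JAy *v dy + \<beta> *\<^sub>R (H *v gy))"
    by (simp add: JAx_def JAy_def matrix_vector_mul_assoc matrix_vector_mult_diff_rdistrib algebra_simps)
  also have "\<dots> \<le> (SUP z \<in> {(dx + JAx *v dy + \<beta> *\<^sub>R (Hxy (x, y) *v gy), JAy *v dy + \<beta> *\<^sub>R (H *v gy))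
                          | dx dy. (dx, dy) \<in> Df (x, y - d)}. w \<bullet> z)"
    by (rule inner_le_SUP_compact_image[OF potential_of_compact[OF f_pot] _ dxy])
      (auto intro!: continuous_intros bounded_linear.continuous_on[OF matrix_vector_mul_bounded_linear])
  finally show ?thesis
    unfolding Let_def H_def[symmetric] gy_def[symmetric] d_def[symmetric]
      JAx_def[symmetric] JAy_def[symmetric] .
qed

end
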